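(* Let $L=\{\ell_1,\dots,\ell_n\}$, $R=\{r_1,\dots,r_d\}$ and let $G$ be a spanning tree of the complete bipartite graph on $L\sqcup R$ with right degree vector $v=(v_1,\dots,v_d)$. For each $r_k\in R$ there is a unique maximal tope with right degree vector $v-\mathbf{1}_{[d]\setminus\{k\}}$ contained in $G$.
   Context: Graphs are identified with edge sets; the right degree vector is $(\deg r_1,\dots,\deg r_d)$. $\mathbf{1}_{A}$ denotes the 0/1 indicator vector of $A\subseteq[d]$, so $v-\mathbf{1}_{[d]\setminus\{k\}}$ subtracts $1$ from every coordinate except the $k$-th. Here a maximal tope with right degree vector $w$ is a bipartite graph on $L\sqcup R$ in which every node of $L$ has degree exactly $1$ and $r_i$ has degree $w_i$ for each $i$. *)

theory Defs
  imports Main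
begin

(* Bipartite graphs on L = {l_0,...,l_(n-1)} and R = {r_0,...,r_(d-1)} are identified
   with their edge sets: a pair (i,j) stands for the edge {l_i, r_j}.
   Vertices are encoded as Inl i (for l_i) and Inr j (for r_j). *)

definition bip_vertices :: "nat \<Rightarrow> nat \<Rightarrow> (nat + nat) set" where
  "bip_vertices n d = Inl ` {..<n} \<union> Inr ` {..<d}"

definition bip_adj :: "(nat \<times> nat) set \<Rightarrow> ((nat + nat) \<times> (nat + nat)) set" where
  "bip_adj G = {(Inl i, Inr j) | i j. (i, j) \<in> G} \<union> {(Inr j, Inl i) | i j. (i, j) \<in> G}"

definition bip_graph :: "nat \<Rightarrow> nat \<Rightarrow> (nat \<times> nat) set \<Rightarrow> bool" where
  "bip_graph n d G \<longleftrightarrow> G \<subseteq> {..<n} \<times> {..<d}"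

definition bip_connected :: "nat \<Rightarrow> nat \<Rightarrow> (nat \<times> nat) set \<Rightarrow> bool" where
  "bip_connected n d G \<longleftrightarrow>
     (\<forall>x\<in>bip_vertices n d. \<forall>y\<in>bip_vertices n d. (x, y) \<in> (bip_adj G)\<^sup>*)"

definition bip_acyclic :: "(nat \<times> nat) set \<Rightarrow> bool" where
  "bip_acyclic G \<longleftrightarrow>
     (\<forall>(i, j)\<in>G. (Inl i, Inr j) \<notin> (bip_adj (G - {(i, j)}))\<^sup>*)"

definition bip_spanning_tree :: "nat \<Rightarrow> nat \<Rightarrow> (nat \<times> nat) set \<Rightarrow> bool" where
  "bip_spanning_tree n d G \<longleftrightarrow> bip_graph n d G \<and> bip_connected n d G \<and> bip_acyclic G"

definition left_deg :: "(nat \<times> nat) set \<Rightarrow> nat \<Rightarrow> nat" where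
  "left_deg G i = card {j. (i, j) \<in> G}"

definition right_deg :: "(nat \<times> nat) set \<Rightarrow> nat \<Rightarrow> nat" where
  "right_deg G j = card {i. (i, j) \<in> G}"

definition maximal_tope :: "nat \<Rightarrow> nat \<Rightarrow> (nat \<Rightarrow> nat) \<Rightarrow> (nat \<times> nat) set \<Rightarrow> bool" where
  "maximal_tope n d w T \<longleftrightarrow> bip_graph n d T \<and>
     (\<forall>i<n. left_deg T i = 1) \<and> (\<forall>j<d. right_deg T j = w j)"

end

theory Submission
  imports Defs
begin

text \<open>Root the tree at \<open>r\<^sub>k\<close> and keep, for every \<open>l\<^sub>i\<close>, the first edge of its path
  to \<open>r\<^sub>k\<close>. Then \<open>r\<^sub>k\<close> keeps all its edges and every other \<open>r\<^sub>j\<close> loses exactly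
  the edge to its parent, which gives the required tope. Conversely, let \<open>T \<subseteq> G\<close> be such
  a tope and suppose \<open>(i, j) \<in> T\<close> points away from the root, i.e. deleting it separates
  \<open>r\<^sub>j\<close> from \<open>r\<^sub>k\<close>. Then \<open>j \<noteq> k\<close>, so \<open>T\<close> misses some edge \<open>(p, j)\<close> with
  \<open>p \<noteq> i\<close>, and the edge of \<open>T\<close> at \<open>l\<^sub>p\<close> again points away from the root, into a
  strictly smaller branch. This descent is impossible, so \<open>T\<close> consists of rootward edges,
  and having one edge at each \<open>l\<^sub>i\<close> it is the rootward tope itself.\<close>

lemma rtrancl_first_step:
  assumes "(x, y) \<in> r\<^sup>*" "x \<noteq> y"
  shows "\<exists>z. (x, z) \<in> r \<and> (z, y) \<in> (r - {(x, z), (z, x)})\<^sup>*"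
  using assms
proof (induction rule: rtrancl_induct)
  case (step y' y)
  show ?case
  proof (cases "y' = x")
    case False
    then obtain z where "(x, z) \<in> r" "(z, y') \<in> (r - {(x, z), (z, x)})\<^sup>*"
      using step.IH by blast
    moreover have "(y', y) \<in> r - {(x, z), (z, x)}"
      using step.hyps(2) step.prems False by auto
    ultimately show ?thesis by (meson rtrancl_into_rtrancl)
  qed (use step.hyps(2) in auto)
qed simp

lemma rtrancl_remove_edge:
  assumes "(x, y) \<in> r\<^sup>*"
  shows "(x, y) \<in> (r - {(a, b), (b, a)})\<^sup>*
    \<or> (x, a) \<in> (r - {(a, b), (b, a)})\<^sup>* \<and> (b, y) \<in> (r - {(a, b), (b, a)})\<^sup>*
    \<or> (x, b) \<in> (r - {(a, b), (b, a)})\<^sup>* \<and> (a, y) \<in> (r - {(a, b), (b, a)})\<^sup>*"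
  using assms
proof (induction rule: rtrancl_induct)
  case (step z y)
  then show ?case
  proof (cases "(z, y) \<in> {(a, b), (b, a)}")
    case True
    with step.IH show ?thesis by auto
  next
    case False
    with step show ?thesis by (meson DiffI rtrancl_into_rtrancl)
  qed
qed simp

lemma sym_bip_adj: "sym (bip_adj H)"
  unfolding bip_adj_def sym_def by blast

lemma rtrancl_bip_adj_sym: "(x, y) \<in> (bip_adj H)\<^sup>* \<Longrightarrow> (y, x) \<in> (bip_adj H)\<^sup>*"
  using sym_rtrancl[OF sym_bip_adj] by (rule symD)

lemma bip_adj_mono: "H \<subseteq> H' \<Longrightarrow> bip_adj H \<subseteq> bip_adj H'"
  unfolding bip_adj_def by blast

lemma bip_adj_Diff_edge:
  "bip_adj (H - {(i, j)}) = bip_adj H - {(Inl i, Inr j), (Inr j, Inl i)}"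
  unfolding bip_adj_def by blast

lemma finite_bip_adj: "finite H \<Longrightarrow> finite (bip_adj H)"
proof -
  assume "finite H"
  moreover have "bip_adj H = (\<lambda>(i, j). (Inl i, Inr j)) ` H \<union> (\<lambda>(i, j). (Inr j, Inl i)) ` H"
    unfolding bip_adj_def by force
  ultimately show ?thesis by simp
qed

definition branch :: "(nat \<times> nat) set \<Rightarrow> nat \<Rightarrow> nat \<Rightarrow> (nat + nat) set" where
  "branch G i j = {x. (Inr j, x) \<in> (bip_adj (G - {(i, j)}))\<^sup>*}"

text \<open>For a tree rooted at \<open>r\<^sub>k\<close>, \<open>(i, j)\<close> is rootward iff it is the first edge
  on the path from \<open>l\<^sub>i\<close> to \<open>r\<^sub>k\<close>.\<close>

definition rootward_edges :: "nat \<Rightarrow> (nat \<times> nat) set \<Rightarrow> (nat \<times> nat) set" where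
  "rootward_edges k G = {(i, j) \<in> G. Inr k \<in> branch G i j}"

lemma Inr_in_branch: "Inr j \<in> branch G i j"
  unfolding branch_def by simp

lemma branch_reach:
  "x \<in> branch G i j \<Longrightarrow> (x, y) \<in> (bip_adj (G - {(i, j)}))\<^sup>* \<Longrightarrow> y \<in> branch G i j"
  unfolding branch_def by (meson mem_Collect_eq rtrancl_trans)

lemma branch_edge:
  "x \<in> branch G i j \<Longrightarrow> (x, y) \<in> bip_adj (G - {(i, j)}) \<Longrightarrow> y \<in> branch G i j"
  by (meson branch_reach r_into_rtrancl)

lemma branch_reach_back:
  "x \<in> branch G i j \<Longrightarrow> (x, Inr j) \<in> (bip_adj (G - {(i, j)}))\<^sup>*"
  unfolding branch_def by (simp add: rtrancl_bip_adj_sym)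

lemma finite_branch: "finite G \<Longrightarrow> finite (branch G i j)"
proof -
  assume "finite G"
  then have "finite (Range (bip_adj G))" by (simp add: finite_bip_adj finite_Range)
  moreover have "branch G i j \<subseteq> insert (Inr j) (Range (bip_adj G))"
  proof
    fix x assume "x \<in> branch G i j"
    then have "(Inr j, x) \<in> (bip_adj G)\<^sup>*"
      unfolding branch_def using rtrancl_mono[OF bip_adj_mono[of "G - {(i, j)}" G]] by blast
    then show "x \<in> insert (Inr j) (Range (bip_adj G))"
      by (metis Range_iff insertCI rtranclE)
  qed
  ultimately show ?thesis by (simp add: finite_subset)
qed

lemma branch_closed:
  assumes x: "x \<in> branch G i j"
    and path: "(x, y) \<in> (bip_adj (G - {e'}))\<^sup>*"
    and avoid: "(x, Inr j) \<notin> (bip_adj (G - {e'}))\<^sup>*"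
  shows "y \<in> branch G i j"
proof -
  let ?R = "bip_adj (G - {e'} - {(i, j)})"
  have R: "?R = bip_adj (G - {e'}) - {(Inl i, Inr j), (Inr j, Inl i)}"
    by (rule bip_adj_Diff_edge)
  have "?R\<^sup>* \<subseteq> (bip_adj (G - {(i, j)}))\<^sup>*" "?R\<^sup>* \<subseteq> (bip_adj (G - {e'}))\<^sup>*"
    by (auto intro!: rtrancl_mono bip_adj_mono)
  with rtrancl_remove_edge[OF path, of "Inl i" "Inr j", folded R] avoid show ?thesis
    using branch_reach[OF x] branch_reach[OF Inr_in_branch] by blast
qed

locale bip_tree =
  fixes n d :: nat and G :: "(nat \<times> nat) set"
  assumes spanning_tree: "bip_spanning_tree n d G"
begin

lemma edges_bounded: "G \<subseteq> {..<n} \<times> {..<d}"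
  using spanning_tree unfolding bip_spanning_tree_def bip_graph_def by blast

lemma finite_edges: "finite G"
  using edges_bounded by (rule finite_subset) simp

lemma reach_Inr:
  assumes "x \<in> bip_vertices n d" "j < d"
  shows "(x, Inr j) \<in> (bip_adj G)\<^sup>*"
  using spanning_tree assms unfolding bip_spanning_tree_def bip_connected_def bip_vertices_def
  by blast

lemma Inl_notin_branch: "(i, j) \<in> G \<Longrightarrow> Inl i \<notin> branch G i j"
  using spanning_tree branch_reach_back
  unfolding bip_spanning_tree_def bip_acyclic_def by fast

lemma branches_disjoint:
  assumes ij: "(i, j) \<in> G" and ij': "(i, j') \<in> G" and "j \<noteq> j'"
  shows "branch G i j \<inter> branch G i j' = {}"
proof (rule ccontr)
  assume "branch G i j \<inter> branch G i j' \<noteq> {}"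
  then obtain x where x: "x \<in> branch G i j" and x': "x \<in> branch G i j'" by blast
  have edge_j: "(Inr j, Inl i) \<in> bip_adj (G - {(i, j')})"
    and edge_j': "(Inr j', Inl i) \<in> bip_adj (G - {(i, j)})"
    using ij ij' \<open>j \<noteq> j'\<close> unfolding bip_adj_def by auto
  have "(x, Inr j) \<notin> (bip_adj (G - {(i, j')}))\<^sup>*"
  proof
    assume "(x, Inr j) \<in> (bip_adj (G - {(i, j')}))\<^sup>*"
    with x' edge_j have "Inl i \<in> branch G i j'" by (meson branch_edge branch_reach)
    with Inl_notin_branch[OF ij'] show False ..
  qed
  with branch_closed[OF x branch_reach_back[OF x']] have "Inr j' \<in> branch G i j" .
  then have "Inl i \<in> branch G i j" using edge_j' by (rule branch_edge)
  with Inl_notin_branch[OF ij] show False ..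
qed

lemma rootward_edge_exists:
  assumes "i < n" "k < d"
  shows "\<exists>j. (i, j) \<in> rootward_edges k G"
proof -
  have "(Inl i, Inr k) \<in> (bip_adj G)\<^sup>*"
    using assms by (intro reach_Inr) (auto simp: bip_vertices_def)
  from rtrancl_first_step[OF this] obtain z
    where "(Inl i, z) \<in> bip_adj G" "(z, Inr k) \<in> (bip_adj G - {(Inl i, z), (z, Inl i)})\<^sup>*"
    by blast
  moreover from this(1) obtain j where "z = Inr j" "(i, j) \<in> G"
    unfolding bip_adj_def by blast
  ultimately show ?thesis
    unfolding rootward_edges_def branch_def by (auto simp: bip_adj_Diff_edge)
qed

lemma rootward_edge_unique:
  "(i, j) \<in> rootward_edges k G \<Longrightarrow> (i, j') \<in> rootward_edges k G \<Longrightarrow> j = j'"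
  unfolding rootward_edges_def using branches_disjoint[of i j j'] by blast

lemma rootward_column_root: "{i. (i, k) \<in> rootward_edges k G} = {i. (i, k) \<in> G}"
  unfolding rootward_edges_def using Inr_in_branch by blast

text \<open>Here \<open>l\<^sub>p\<close> is the parent of \<open>r\<^sub>j\<close>.\<close>

lemma rootward_column:
  assumes "j < d" "k < d" "j \<noteq> k"
  obtains p where "(p, j) \<in> G" "{i. (i, j) \<in> rootward_edges k G} = {i. (i, j) \<in> G} - {p}"
proof -
  have "(Inr j, Inr k) \<in> (bip_adj G)\<^sup>*"
    using assms by (intro reach_Inr) (auto simp: bip_vertices_def)
  from rtrancl_first_step[OF this] obtain z
    where "(Inr j, z) \<in> bip_adj G" "(z, Inr k) \<in> (bip_adj G - {(Inr j, z), (z, Inr j)})\<^sup>*"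
    using \<open>j \<noteq> k\<close> by blast
  moreover from this(1) obtain p where "z = Inl p" "(p, j) \<in> G"
    unfolding bip_adj_def by blast
  ultimately have pj: "(p, j) \<in> G" and p_to_root: "(Inl p, Inr k) \<in> (bip_adj (G - {(p, j)}))\<^sup>*"
    by (simp_all add: bip_adj_Diff_edge insert_commute)
  have "(i, j) \<in> rootward_edges k G \<longleftrightarrow> (i, j) \<in> G \<and> i \<noteq> p" for i
  proof (cases "i = p")
    case True
    have "Inr k \<notin> branch G p j"
    proof
      assume "Inr k \<in> branch G p j"
      then have "Inl p \<in> branch G p j"
        using branch_reach rtrancl_bip_adj_sym[OF p_to_root] by blast
      with Inl_notin_branch[OF pj] show False ..
    qed
    with True show ?thesis unfolding rootward_edges_def by blast
  next
    case False
    have "Inl p \<in> branch G i j"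
      using pj False by (intro branch_edge[OF Inr_in_branch]) (auto simp: bip_adj_def)
    moreover have "(Inl p, Inr j) \<notin> (bip_adj (G - {(p, j)}))\<^sup>*"
      using Inl_notin_branch[OF pj] branch_reach[OF Inr_in_branch] rtrancl_bip_adj_sym[of "Inl p"]
      by blast
    ultimately have "Inr k \<in> branch G i j" by (rule branch_closed[OF _ p_to_root])
    with False show ?thesis unfolding rootward_edges_def by blast
  qed
  with pj show ?thesis using that by blast
qed

lemma finite_column: "finite {i. (i, j) \<in> G}"
proof -
  have "{i. (i, j) \<in> G} \<subseteq> fst ` G"
    by force
  then show ?thesis
    using finite_edges by (simp add: finite_subset)
qed

lemma rootward_edges_maximal_tope:
  assumes "k < d"
  shows "maximal_tope n d (\<lambda>j. if j = k then right_deg G j else right_deg G j - 1)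
    (rootward_edges k G)"
  unfolding maximal_tope_def
proof (intro conjI allI impI)
  show "bip_graph n d (rootward_edges k G)"
    using edges_bounded unfolding bip_graph_def rootward_edges_def by blast
next
  fix i assume "i < n"
  with assms obtain j where "(i, j) \<in> rootward_edges k G"
    using rootward_edge_exists by blast
  then have "{j'. (i, j') \<in> rootward_edges k G} = {j}"
    using rootward_edge_unique by blast
  then show "left_deg (rootward_edges k G) i = 1"
    unfolding left_deg_def by simp
next
  fix j assume "j < d"
  show "right_deg (rootward_edges k G) j = (if j = k then right_deg G j else right_deg G j - 1)"
  proof (cases "j = k")
    case False
    with \<open>j < d\<close> assms obtain p
      where "(p, j) \<in> G" "{i. (i, j) \<in> rootward_edges k G} = {i. (i, j) \<in> G} - {p}"
      by (rule rootward_column)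
    with False show ?thesis
      unfolding right_deg_def by (simp add: finite_column)
  qed (simp add: right_deg_def rootward_column_root)
qed

lemma branch_psubset:
  assumes ij: "(i, j) \<in> G" and pj: "(p, j) \<in> G" and pj': "(p, j') \<in> G"
    and "i \<noteq> p" "j \<noteq> j'"
  shows "branch G p j' \<subset> branch G i j"
proof -
  have edge_jp: "(Inr j, Inl p) \<in> bip_adj (G - {(i, j)})"
    and edge_pj': "(Inl p, Inr j') \<in> bip_adj (G - {(i, j)})"
    and edge_jp': "(Inr j, Inl p) \<in> bip_adj (G - {(p, j')})"
    using assms unfolding bip_adj_def by auto
  have p_in: "Inl p \<in> branch G i j"
    using edge_jp by (rule branch_edge[OF Inr_in_branch])
  have "branch G p j' \<subseteq> branch G i j"
  proof
    fix x assume "x \<in> branch G p j'"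
    have j'_in: "Inr j' \<in> branch G i j"
      using p_in edge_pj' by (rule branch_edge)
    have avoid: "(Inr j', Inr j) \<notin> (bip_adj (G - {(p, j')}))\<^sup>*"
    proof
      assume "(Inr j', Inr j) \<in> (bip_adj (G - {(p, j')}))\<^sup>*"
      then have "Inl p \<in> branch G p j'"
        using edge_jp' by (meson Inr_in_branch branch_edge branch_reach)
      with Inl_notin_branch[OF pj'] show False ..
    qed
    have "(Inr j', x) \<in> (bip_adj (G - {(p, j')}))\<^sup>*"
      using \<open>x \<in> branch G p j'\<close> unfolding branch_def by simp
    then show "x \<in> branch G i j"
      using j'_in avoid branch_closed by blast
  qed
  with p_in Inl_notin_branch[OF pj'] show ?thesis by blast
qed

lemma subset_rootward_edges:
  assumes TG: "T \<subseteq> G"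
    and left_covered: "\<And>i. i < n \<Longrightarrow> \<exists>j. (i, j) \<in> T"
    and column_missing: "\<And>i j. (i, j) \<in> T \<Longrightarrow> j \<noteq> k \<Longrightarrow> \<exists>p. (p, j) \<in> G - T"
  shows "T \<subseteq> rootward_edges k G"
proof -
  have "Inr k \<in> branch G i j" if "(i, j) \<in> T" for i j
    using that
  proof (induction "card (branch G i j)" arbitrary: i j rule: less_induct)
    case less
    show ?case
    proof (rule ccontr)
      assume k_out: "Inr k \<notin> branch G i j"
      then have "j \<noteq> k"
        using Inr_in_branch by metis
      with less.prems column_missing obtain p where pj: "(p, j) \<in> G" "(p, j) \<notin> T"
        by blast
      then have "p \<noteq> i" and "p < n"
        using less.prems edges_bounded by auto
      then obtain j' where pj': "(p, j') \<in> T"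
        using left_covered by blast
      then have "j \<noteq> j'"
        using pj by blast
      have psub: "branch G p j' \<subset> branch G i j"
        using less.prems pj pj' TG \<open>p \<noteq> i\<close> \<open>j \<noteq> j'\<close> by (intro branch_psubset) auto
      then have "card (branch G p j') < card (branch G i j)"
        by (simp add: psubset_card_mono finite_branch finite_edges)
      then have "Inr k \<in> branch G p j'"
        using less.hyps pj' by blast
      with psub k_out show False
        by blast
    qed
  qed
  with TG show ?thesis
    unfolding rootward_edges_def by auto
qed

lemma maximal_tope_eq_rootward_edges:
  assumes TG: "T \<subseteq> G"
    and tope: "maximal_tope n d (\<lambda>j. if j = k then right_deg G j else right_deg G j - 1) T"
  shows "T = rootward_edges k G"
proof -
  have left_deg: "card {j. (i, j) \<in> T} = 1" if "i < n" for i
    using tope that unfolding maximal_tope_def left_deg_def by blast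
  have T_rootward: "T \<subseteq> rootward_edges k G"
  proof (rule subset_rootward_edges[OF TG])
    show "\<exists>j. (i, j) \<in> T" if "i < n" for i
      using left_deg[OF that] by (metis card_1_singletonE insertI1 mem_Collect_eq)
  next
    fix i j assume ij: "(i, j) \<in> T" and "j \<noteq> k"
    then have "j < d"
      using TG edges_bounded by blast
    with tope \<open>j \<noteq> k\<close> have "card {i. (i, j) \<in> T} = card {i. (i, j) \<in> G} - 1"
      unfolding maximal_tope_def right_deg_def by auto
    moreover have "card {i. (i, j) \<in> G} > 0"
      using ij TG finite_column by (auto simp: card_gt_0_iff)
    ultimately have "{i. (i, j) \<in> T} \<noteq> {i. (i, j) \<in> G}"
      by auto
    with TG show "\<exists>p. (p, j) \<in> G - T"
      by blast
  qed
  moreover have "rootward_edges k G \<subseteq> T"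
  proof (clarify)
    fix i j assume ij: "(i, j) \<in> rootward_edges k G"
    then have "i < n"
      using edges_bounded unfolding rootward_edges_def by blast
    then obtain j' where "(i, j') \<in> T"
      using left_deg by (metis card_1_singletonE insertI1 mem_Collect_eq)
    moreover from this have "j' = j"
      using ij rootward_edge_unique T_rootward by blast
    ultimately show "(i, j) \<in> T"
      by simp
  qed
  ultimately show ?thesis ..
qed

end

theorem proposition2p9:
  fixes n d k :: nat and G :: "(nat \<times> nat) set"
  assumes "bip_spanning_tree n d G"
    and "k < d"
  shows "\<exists>!T. T \<subseteq> G \<and>
           maximal_tope n d (\<lambda>j. if j = k then right_deg G j else right_deg G j - 1) T"
proof -
  interpret bip_tree n d G
    using assms(1) by unfold_locales
  show ?thesis
  proof (rule ex1I[of _ "rootward_edges k G"])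
    show "rootward_edges k G \<subseteq> G \<and>
      maximal_tope n d (\<lambda>j. if j = k then right_deg G j else right_deg G j - 1) (rootward_edges k G)"
      using rootward_edges_maximal_tope[OF assms(2)] unfolding rootward_edges_def by blast
  qed (use maximal_tope_eq_rootward_edges in blast)
qed

end
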